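(* Under the assumptions and with the function $V$ defined as follows, the minimum below exists and $$V(x)=\|x\|+\min_{u\in\mathbb{R}^m}\max_{i\in\Sigma}V(A_ix+B_iu)\quad\text{for all }x\in\mathbb{R}^n.$$ Here the system is assumed IFS$_m$, and $V(x_0)=\inf_{\Psi\in\mathcal{C}_m}\sup_{\sigma\in\Sigma^\omega}\sum_{k=0}^{\infty}\|\phi(k,\sigma,x_0,\Psi)\|$, where $\mathcal{C}_m$ is the set of all functions $\mathcal{H}_-\to\mathbb{R}^m$.
   Context: Let $\Sigma$ be a finite nonempty set and $\{(A_i,B_i)\in\mathbb{R}^{n\times n}\times\mathbb{R}^{n\times m} : i\in\Sigma\}$. Consider $x(k+1)=A_{\sigma(k)}x(k)+B_{\sigma(k)}u(k)$, $k\in\mathbb{N}=\{0,1,\dots\}$, with arbitrary switching signal $\sigma:\mathbb{N}\to\Sigma$ (set of all such: $\Sigma^\omega$). $\|\cdot\|$ is the Euclidean norm. $\mathcal{H}_-$ is the set of all tuples $(x_k,\dots,x_0;\,i_{k-1},\dots,i_0)$ with $k\in\mathbb{N}$, $x_j\in\mathbb{R}^n$, $i_j\in\Sigma$ (mode string empty when $k=0$). For a function $\Psi:\mathcal{H}_-\to\mathbb{R}^m$ (a current-mode-independent controller with memory), $\phi(k,\sigma,x_0,\Psi)$ denotes the closed-loop trajectory defined by $x(0)=x_0$ and $x(k+1)=A_{\sigma(k)}x(k)+B_{\sigma(k)}\Psi(x(k),\dots,x(0);\,\sigma(k-1),\dots,\sigma(0))$. The system is IFS$_m$ if there exists such $\Psi$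 and constants $M>0,\gamma\in[0,1)$ with $\|\phi(k,\sigma,x_0,\Psi)\|\le M\gamma^k\|x_0\|$ for all $x_0\in\mathbb{R}^n,\sigma\in\Sigma^\omega,k\in\mathbb{N}$. *)

theory Defs
  imports "HOL-Analysis.Analysis" "HOL-Library.Extended_Nonnegative_Real"
begin

text \<open>A history (x_k,...,x_0; i_{k-1},...,i_0) is represented as a pair of lists
  ([x_k,...,x_0], [i_{k-1},...,i_0]); a controller with memory is a function
  Psi :: (real^'n) list => 'i list => real^'m.\<close>

definition signals :: "'i set \<Rightarrow> (nat \<Rightarrow> 'i) set" where
  "signals S = {\<sigma>. \<forall>k. \<sigma> k \<in> S}"

primrec hist ::
  "('i \<Rightarrow> real^'n^'n) \<Rightarrow> ('i \<Rightarrow> real^'m^'n) \<Rightarrow> (nat \<Rightarrow> 'i) \<Rightarrow> real^'n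
   \<Rightarrow> ((real^'n) list \<Rightarrow> 'i list \<Rightarrow> real^'m) \<Rightarrow> nat \<Rightarrow> (real^'n) list" where
  "hist A B \<sigma> x0 \<Psi> 0 = [x0]"
| "hist A B \<sigma> x0 \<Psi> (Suc k) =
     (A (\<sigma> k) *v hd (hist A B \<sigma> x0 \<Psi> k)
      + B (\<sigma> k) *v \<Psi> (hist A B \<sigma> x0 \<Psi> k) (map \<sigma> (rev [0..<k])))
     # hist A B \<sigma> x0 \<Psi> k"

definition phi ::
  "('i \<Rightarrow> real^'n^'n) \<Rightarrow> ('i \<Rightarrow> real^'m^'n) \<Rightarrow> nat \<Rightarrow> (nat \<Rightarrow> 'i) \<Rightarrow> real^'n
   \<Rightarrow> ((real^'n) list \<Rightarrow> 'i list \<Rightarrow> real^'m) \<Rightarrow> real^'n" where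
  "phi A B k \<sigma> x0 \<Psi> = hd (hist A B \<sigma> x0 \<Psi> k)"

definition IFS_m ::
  "'i set \<Rightarrow> ('i \<Rightarrow> real^'n^'n) \<Rightarrow> ('i \<Rightarrow> real^'m^'n) \<Rightarrow> bool" where
  "IFS_m S A B \<longleftrightarrow> (\<exists>(\<Psi> :: (real^'n) list \<Rightarrow> 'i list \<Rightarrow> real^'m) (M::real) (\<gamma>::real).
     M > 0 \<and> 0 \<le> \<gamma> \<and> \<gamma> < 1 \<and>
     (\<forall>x0 \<sigma> k. \<sigma> \<in> signals S \<longrightarrow> norm (phi A B k \<sigma> x0 \<Psi>) \<le> M * \<gamma> ^ k * norm x0))"

definition Vfun ::
  "'i set \<Rightarrow> ('i \<Rightarrow> real^'n^'n) \<Rightarrow> ('i \<Rightarrow> real^'m^'n) \<Rightarrow> real^'n \<Rightarrow> ennreal" where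
  "Vfun S A B x0 = (INF (\<Psi> :: (real^'n) list \<Rightarrow> 'i list \<Rightarrow> real^'m). SUP \<sigma>\<in>signals S.
      (\<Sum>k. ennreal (norm (phi A B k \<sigma> x0 \<Psi>))))"

end

theory Submission
  imports Defs
begin

(*
  Splitting off the first step of the game shows that the worst-case cost of a controller Psi
  from x is |x| plus the largest, over the first mode i, of the cost from A_i x + B_i u of the
  controller shifted by one step, where u is the first input. Since a controller can be
  assembled freely from a first input and one continuation per mode, taking infima gives
  V x = |x| + inf_u max_i V (A_i x + B_i u) for every nonempty mode set.

  It remains to show that the infimum is attained. For a fixed initial state every controller
  can be replaced by an open-loop one (a function of the mode history only), so trajectories
  depend linearly on the initial state and the controller, and V is subadditive. Together with
  the bound V x <= C |x| provided by IFS_m this makes V finite and Lipschitz. The function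
  u |-> max_i V (A_i x + B_i u) is then continuous, invariant under the common kernel of the
  B_i and, because V z >= |z|, coercive on the orthogonal complement of that kernel; so it
  attains its minimum.
*)

section \<open>Infima, suprema and minimisers\<close>

lemma suminf_ennreal_Suc: "(\<Sum>k. f k) = f 0 + (\<Sum>k. f (Suc k) :: ennreal)"
  by (metis add.commute summableI summable_sums sums_Suc sums_unique)

lemma ennreal_add_INF: "c + (INF i\<in>I. f i) = (INF i\<in>I. c + f i :: ennreal)"
proof (cases "I = {}")
  case False
  have "continuous (at_right (Inf (f ` I))) ((+) c)"
    by (intro continuous_intros)
  then show ?thesis
    using False by (subst continuous_at_Inf_mono) (auto simp: mono_def image_comp)
qed simp

lemma INF_SUP_choice_le:
  fixes F :: "'i \<Rightarrow> 'a \<Rightarrow> 'b::{complete_linorder, dense_linorder}"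
  shows "(INF g. SUP i\<in>I. F i (g i)) \<le> (SUP i\<in>I. INF a. F i a)"
proof (rule dense_ge)
  fix t assume "(SUP i\<in>I. INF a. F i a) < t"
  then have "\<forall>i\<in>I. \<exists>a. F i a < t"
    by (meson INF_less_iff SUP_upper le_less_trans)
  then obtain g where "\<And>i. i \<in> I \<Longrightarrow> F i (g i) < t"
    by metis
  then have "(SUP i\<in>I. F i (g i)) \<le> t"
    by (meson SUP_least less_imp_le)
  then show "(INF g. SUP i\<in>I. F i (g i)) \<le> t"
    by (metis INF_lower2 UNIV_I)
qed

lemma lipschitz_on_subadditive:
  fixes f :: "'a::real_normed_vector \<Rightarrow> real"
  assumes subadditive: "\<And>x y. f (x + y) \<le> f x + f y"
    and linear_bound: "\<And>x. f x \<le> C * norm x" and "C \<ge> 0"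
  shows "C-lipschitz_on UNIV f"
proof (rule lipschitz_onI)
  fix x y
  have "f x \<le> f y + C * norm (x - y)" "f y \<le> f x + C * norm (x - y)"
    using subadditive[of y "x - y"] subadditive[of x "y - x"]
      linear_bound[of "x - y"] linear_bound[of "y - x"]
    by (simp_all add: norm_minus_commute)
  then show "dist (f x) (f y) \<le> C * dist x y"
    by (simp add: dist_real_def dist_norm abs_le_iff)
qed fact

lemma continuous_on_Max:
  fixes f :: "'i \<Rightarrow> 'a::topological_space \<Rightarrow> 'b::linorder_topology"
  assumes "finite I" "I \<noteq> {}" "\<And>i. i \<in> I \<Longrightarrow> continuous_on U (f i)"
  shows "continuous_on U (\<lambda>x. Max ((\<lambda>i. f i x) ` I))"
  using assms
proof (induction I rule: finite_ne_induct)
  case (insert i I)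
  then show ?case
    by (simp add: continuous_on_max)
qed simp

lemma positively_homogeneous_bounded_below_on_subspace:
  fixes h :: "'a::euclidean_space \<Rightarrow> real"
  assumes P: "subspace P" and cont: "continuous_on P h"
    and homogeneous: "\<And>c p. p \<in> P \<Longrightarrow> h (c *\<^sub>R p) = \<bar>c\<bar> * h p"
    and pos: "\<And>p. p \<in> P \<Longrightarrow> p \<noteq> 0 \<Longrightarrow> 0 < h p"
  obtains c where "c > 0" "\<And>p. p \<in> P \<Longrightarrow> c * norm p \<le> h p"
proof -
  have normalize: "p /\<^sub>R norm p \<in> P \<inter> sphere 0 1" "h p = norm p * h (p /\<^sub>R norm p)"
    if "p \<in> P" "p \<noteq> 0" for p
    using that subspace_scale[OF P \<open>p \<in> P\<close>, of "inverse (norm p)"]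
      homogeneous[OF \<open>p \<in> P\<close>, of "inverse (norm p)"]
    by simp_all
  obtain c where "c > 0" and c: "\<And>q. q \<in> P \<inter> sphere 0 1 \<Longrightarrow> c \<le> h q"
  proof (cases "P \<inter> sphere 0 1 = {}")
    case True
    then show ?thesis
      by (intro that[of 1]) auto
  next
    case False
    have "compact (P \<inter> sphere 0 1)"
      by (intro closed_Int_compact closed_subspace P compact_sphere)
    then obtain q0 where q0: "q0 \<in> P \<inter> sphere 0 1" "\<And>q. q \<in> P \<inter> sphere 0 1 \<Longrightarrow> h q0 \<le> h q"
      using continuous_attains_inf[of "P \<inter> sphere 0 1" h] False continuous_on_subset[OF cont]
      by blast
    then have "h q0 > 0"
      by (intro pos) auto
    with q0 show ?thesis
      by (intro that[of "h q0"])
  qed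
  have "c * norm p \<le> h p" if "p \<in> P" for p
  proof (cases "p = 0")
    case True
    then show ?thesis
      using homogeneous[of 0 0] subspace_0[OF P] by simp
  next
    case False
    then show ?thesis
      using normalize[OF that False] c[of "p /\<^sub>R norm p"] by (simp add: mult.commute)
  qed
  with \<open>c > 0\<close> show ?thesis
    by (intro that)
qed

lemma subspace_common_kernel:
  "(\<And>i. i \<in> I \<Longrightarrow> linear (L i)) \<Longrightarrow> subspace {k. \<forall>i\<in>I. L i k = 0}"
  by (auto simp: subspace_def linear_add linear_scale linear_0)

lemma sum_norm_kernels_bounded_below:
  fixes L :: "'i \<Rightarrow> 'a::euclidean_space \<Rightarrow> 'b::real_normed_vector"
  assumes "finite I" and linear: "\<And>i. i \<in> I \<Longrightarrow> linear (L i)"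
  obtains c where "c > 0"
    "\<And>p. p \<in> orthogonal_comp {k. \<forall>i\<in>I. L i k = 0} \<Longrightarrow> c * norm p \<le> (\<Sum>i\<in>I. norm (L i p))"
proof -
  define K where "K = {k. \<forall>i\<in>I. L i k = 0}"
  have K: "subspace K"
    unfolding K_def using linear by (rule subspace_common_kernel)
  have "continuous_on (orthogonal_comp K) (\<lambda>p. \<Sum>i\<in>I. norm (L i p))"
    using linear by (intro continuous_on_sum continuous_on_norm linear_continuous_on)
      (simp add: linear_conv_bounded_linear)
  moreover have "(\<Sum>i\<in>I. norm (L i (c *\<^sub>R p))) = \<bar>c\<bar> * (\<Sum>i\<in>I. norm (L i p))" for c p
    using linear by (simp add: linear_scale sum_distrib_left)
  moreover have "0 < (\<Sum>i\<in>I. norm (L i p))" if "p \<in> orthogonal_comp K" "p \<noteq> 0" for p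
  proof -
    have "p \<notin> K"
      using orthogonal_Int_0[OF K] that by auto
    then show ?thesis
      unfolding K_def using \<open>finite I\<close> by (auto intro!: sum_pos2 simp: sum_nonneg)
  qed
  ultimately show ?thesis
    using positively_homogeneous_bounded_below_on_subspace[OF subspace_orthogonal_comp] that
    unfolding K_def by blast
qed

lemma continuous_attains_min_if_large_off_ball:
  fixes f :: "'a::{heine_borel, real_normed_vector} \<Rightarrow> real"
  assumes "closed P" "a \<in> P" "continuous_on P f"
    and large: "\<And>z. z \<in> P \<Longrightarrow> R < norm z \<Longrightarrow> f a \<le> f z"
  obtains u0 where "u0 \<in> P" "\<And>z. z \<in> P \<Longrightarrow> f u0 \<le> f z"
proof -
  define T where "T = P \<inter> cball 0 (max R (norm a))"
  have "compact T" "a \<in> T"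
    using assms(1,2) by (auto simp: T_def intro!: closed_Int_compact)
  then obtain u0 where "u0 \<in> T" and u0: "\<And>z. z \<in> T \<Longrightarrow> f u0 \<le> f z"
    using continuous_attains_inf[of T f] continuous_on_subset[OF assms(3)] unfolding T_def by blast
  have "f u0 \<le> f z" if "z \<in> P" for z
  proof (cases "z \<in> T")
    case False
    then have "f a \<le> f z"
      using that by (intro large) (auto simp: T_def)
    then show ?thesis
      using u0[OF \<open>a \<in> T\<close>] by simp
  qed (rule u0)
  with \<open>u0 \<in> T\<close> show ?thesis
    using that unfolding T_def by blast
qed

lemma continuous_attains_min_if_coercive_modulo_kernels:
  fixes f :: "'a::euclidean_space \<Rightarrow> real" and L :: "'i \<Rightarrow> 'a \<Rightarrow> 'b::real_normed_vector"
  assumes "finite I" and linear: "\<And>i. i \<in> I \<Longrightarrow> linear (L i)"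
    and cont: "continuous_on UNIV f"
    and invariant: "\<And>u k. (\<forall>i\<in>I. L i k = 0) \<Longrightarrow> f (u + k) = f u"
    and coercive: "\<And>i u. i \<in> I \<Longrightarrow> norm (L i u) \<le> a i + f u"
  obtains u0 where "\<And>u. f u0 \<le> f u"
proof -
  define K where "K = {k. \<forall>i\<in>I. L i k = 0}"
  define P where "P = orthogonal_comp K"
  have K: "subspace K"
    unfolding K_def using linear by (rule subspace_common_kernel)
  have P: "subspace P"
    unfolding P_def by (rule subspace_orthogonal_comp)
  obtain c where "c > 0" and c: "\<And>p. p \<in> P \<Longrightarrow> c * norm p \<le> (\<Sum>i\<in>I. norm (L i p))"
    using sum_norm_kernels_bounded_below[of I L] assms(1) linear unfolding P_def K_def by blast
  have bound: "(\<Sum>i\<in>I. norm (L i u)) \<le> sum a I + real (card I) * f u" for u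
    using sum_mono[of I "\<lambda>i. norm (L i u)" "\<lambda>i. a i + f u"] coercive by (simp add: sum.distrib)
  have large: "f 0 \<le> f z" if "z \<in> P" "(sum a I + real (card I) * f 0) / c < norm z" for z
  proof -
    have "real (card I) * f 0 < (\<Sum>i\<in>I. norm (L i z)) - sum a I"
      using that(2) c[OF that(1)] \<open>c > 0\<close> by (simp add: field_simps)
    also have "\<dots> \<le> real (card I) * f z"
      using bound[of z] by simp
    finally have "f 0 < f z"
      by (rule mult_left_less_imp_less) simp
    then show ?thesis
      by simp
  qed
  obtain z0 where z0: "\<And>z. z \<in> P \<Longrightarrow> f z0 \<le> f z"
    using continuous_attains_min_if_large_off_ball[OF closed_subspace[OF P] subspace_0[OF P]
        continuous_on_subset[OF cont subset_UNIV] large]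
    by blast
  have "f z0 \<le> f u" for u
  proof -
    obtain y z where "y \<in> K" "z \<in> P" "u = y + z"
      using subspace_sum_orthogonal_comp[OF K] unfolding P_def set_plus_def by blast
    then show ?thesis
      using z0[of z] invariant[where u = z and k = y] by (simp add: K_def add.commute)
  qed
  then show ?thesis
    using that by blast
qed

section \<open>Closed-loop trajectories and controllers\<close>

lemma hist_ne_Nil: "hist A B \<sigma> x \<Psi> k \<noteq> []"
  by (cases k) auto

lemma phi_0 [simp]: "phi A B 0 \<sigma> x \<Psi> = x"
  by (simp add: phi_def)

lemma phi_Suc:
  "phi A B (Suc k) \<sigma> x \<Psi> =
     A (\<sigma> k) *v phi A B k \<sigma> x \<Psi> + B (\<sigma> k) *v \<Psi> (hist A B \<sigma> x \<Psi> k) (map \<sigma> (rev [0..<k]))"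
  by (simp add: phi_def)

definition shift_controller ::
  "((real^'n) list \<Rightarrow> 'i list \<Rightarrow> real^'m) \<Rightarrow> real^'n \<Rightarrow> 'i \<Rightarrow> (real^'n) list \<Rightarrow> 'i list \<Rightarrow> real^'m"
  where "shift_controller \<Psi> x i = (\<lambda>h ms. \<Psi> (h @ [x]) (ms @ [i]))"

lemma hist_Suc_shift:
  "hist A B \<sigma> x \<Psi> (Suc k) =
     hist A B (\<sigma> \<circ> Suc) (A (\<sigma> 0) *v x + B (\<sigma> 0) *v \<Psi> [x] []) (shift_controller \<Psi> x (\<sigma> 0)) k @ [x]"
proof (induction k)
  case 0
  then show ?case by (simp add: shift_controller_def)
next
  case (Suc k)
  define H where "H = hist A B (\<sigma> \<circ> Suc) (A (\<sigma> 0) *v x + B (\<sigma> 0) *v \<Psi> [x] [])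
    (shift_controller \<Psi> x (\<sigma> 0)) k"
  have modes: "map \<sigma> (rev [0..<Suc k]) = map (\<sigma> \<circ> Suc) (rev [0..<k]) @ [\<sigma> 0]"
    by (simp add: upt_conv_Cons map_Suc_upt[symmetric] rev_map del: upt_Suc)
  have "hist A B \<sigma> x \<Psi> (Suc k) = H @ [x]"
    using Suc.IH unfolding H_def .
  then show ?case
    using hist_ne_Nil[of A B "\<sigma> \<circ> Suc"]
    by (simp only: hist.simps(2)[of A B \<sigma> x \<Psi> "Suc k"] modes)
       (simp add: H_def hd_append shift_controller_def comp_def)
qed

lemma phi_Suc_shift:
  "phi A B (Suc k) \<sigma> x \<Psi> =
     phi A B k (\<sigma> \<circ> Suc) (A (\<sigma> 0) *v x + B (\<sigma> 0) *v \<Psi> [x] []) (shift_controller \<Psi> x (\<sigma> 0))"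
  unfolding phi_def hist_Suc_shift by (simp add: hd_append hist_ne_Nil)

lemma hist_cong: "(\<And>j. j < k \<Longrightarrow> \<sigma> j = \<tau> j) \<Longrightarrow> hist A B \<sigma> x \<Psi> k = hist A B \<tau> x \<Psi> k"
proof (induction k)
  case (Suc k)
  have "hist A B \<sigma> x \<Psi> k = hist A B \<tau> x \<Psi> k"
    "map \<sigma> (rev [0..<k]) = map \<tau> (rev [0..<k])" "\<sigma> k = \<tau> k"
    using Suc by simp_all
  then show ?case
    by (simp only: hist.simps)
qed simp

text \<open>\<open>G\<close> replays the closed loop along the mode string it is given.\<close>

lemma hist_open_loop: "\<exists>G. \<forall>\<sigma> k. hist A B \<sigma> x \<Psi> k = hist A B \<sigma> x (\<lambda>_. G) k"
proof -
  define G where "G ms = \<Psi> (hist A B (\<lambda>j. rev ms ! j) x \<Psi> (length ms)) ms" for ms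
  have "hist A B \<sigma> x \<Psi> k = hist A B \<sigma> x (\<lambda>_. G) k" for \<sigma> k
  proof (induction k)
    case (Suc k)
    define ms where "ms = map \<sigma> (rev [0..<k])"
    have "hist A B (\<lambda>j. rev ms ! j) x \<Psi> k = hist A B \<sigma> x \<Psi> k"
      by (rule hist_cong) (simp add: ms_def rev_map)
    then have "G ms = \<Psi> (hist A B \<sigma> x \<Psi> k) ms"
      by (simp add: G_def ms_def)
    with Suc.IH show ?case
      by (simp add: ms_def)
  qed simp
  then show ?thesis
    by blast
qed

lemma phi_open_loop_add:
  "phi A B k \<sigma> (x + y) (\<lambda>_ ms. G1 ms + G2 ms) = phi A B k \<sigma> x (\<lambda>_. G1) + phi A B k \<sigma> y (\<lambda>_. G2)"
  by (induction k) (simp_all add: phi_Suc matrix_vector_right_distrib algebra_simps)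

text \<open>Histories are stored newest first, so \<open>last ms\<close> is the first mode and
  \<open>butlast\<close> strips the first step.\<close>

definition branch_controller ::
  "real^'m \<Rightarrow> ('i \<Rightarrow> (real^'n) list \<Rightarrow> 'i list \<Rightarrow> real^'m) \<Rightarrow> (real^'n) list \<Rightarrow> 'i list \<Rightarrow> real^'m"
  where "branch_controller u \<Psi>s h ms = (if ms = [] then u else \<Psi>s (last ms) (butlast h) (butlast ms))"

lemma branch_controller_Nil: "branch_controller u \<Psi>s [x] [] = u"
  by (simp add: branch_controller_def)

lemma shift_branch_controller: "shift_controller (branch_controller u \<Psi>s) x i = \<Psi>s i"
  by (simp add: shift_controller_def branch_controller_def fun_eq_iff)

section \<open>The Bellman equation\<close>

lemma signals_nonempty: "S \<noteq> {} \<Longrightarrow> signals S \<noteq> {}"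
  by (auto simp: signals_def)

lemma SUP_signals_unfold:
  fixes F :: "'i \<Rightarrow> (nat \<Rightarrow> 'i) \<Rightarrow> 'a::complete_lattice"
  shows "(SUP \<sigma>\<in>signals S. F (\<sigma> 0) (\<sigma> \<circ> Suc)) = (SUP i\<in>S. SUP \<sigma>\<in>signals S. F i \<sigma>)"
proof (rule antisym)
  have "F (\<sigma> 0) (\<sigma> \<circ> Suc) \<le> (SUP i\<in>S. SUP \<sigma>\<in>signals S. F i \<sigma>)" if "\<sigma> \<in> signals S" for \<sigma>
  proof -
    have "\<sigma> 0 \<in> S" "\<sigma> \<circ> Suc \<in> signals S"
      using that by (simp_all add: signals_def)
    then show ?thesis
      by (blast intro: SUP_upper2)
  qed
  then show "(SUP \<sigma>\<in>signals S. F (\<sigma> 0) (\<sigma> \<circ> Suc)) \<le> (SUP i\<in>S. SUP \<sigma>\<in>signals S. F i \<sigma>)"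
    by (rule SUP_least)
next
  have "F i \<sigma> \<le> (SUP \<sigma>\<in>signals S. F (\<sigma> 0) (\<sigma> \<circ> Suc))" if "i \<in> S" "\<sigma> \<in> signals S" for i \<sigma>
  proof -
    have "case_nat i \<sigma> \<in> signals S"
      using that by (auto simp: signals_def split: nat.split)
    from SUP_upper[OF this, of "\<lambda>\<sigma>. F (\<sigma> 0) (\<sigma> \<circ> Suc)"] show ?thesis
      by (simp add: comp_def)
  qed
  then show "(SUP i\<in>S. SUP \<sigma>\<in>signals S. F i \<sigma>) \<le> (SUP \<sigma>\<in>signals S. F (\<sigma> 0) (\<sigma> \<circ> Suc))"
    by (intro SUP_least) auto
qed

definition cost ::
  "'i set \<Rightarrow> ('i \<Rightarrow> real^'n^'n) \<Rightarrow> ('i \<Rightarrow> real^'m^'n) \<Rightarrow> real^'n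
   \<Rightarrow> ((real^'n) list \<Rightarrow> 'i list \<Rightarrow> real^'m) \<Rightarrow> ennreal"
  where "cost S A B x \<Psi> = (SUP \<sigma>\<in>signals S. \<Sum>k. ennreal (norm (phi A B k \<sigma> x \<Psi>)))"

lemma Vfun_eq_INF_cost: "Vfun S A B x = (INF \<Psi>. cost S A B x \<Psi>)"
  unfolding Vfun_def cost_def ..

lemma cost_unfold:
  assumes "S \<noteq> {}"
  shows "cost S A B x \<Psi> = ennreal (norm x) +
    (SUP i\<in>S. cost S A B (A i *v x + B i *v \<Psi> [x] []) (shift_controller \<Psi> x i))"
proof -
  have "cost S A B x \<Psi> = (SUP \<sigma>\<in>signals S. ennreal (norm x) +
      (\<Sum>k. ennreal (norm (phi A B k (\<sigma> \<circ> Suc) (A (\<sigma> 0) *v x + B (\<sigma> 0) *v \<Psi> [x] [])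
        (shift_controller \<Psi> x (\<sigma> 0))))))"
    unfolding cost_def by (subst suminf_ennreal_Suc) (simp only: phi_0 phi_Suc_shift)
  also have "\<dots> = (SUP i\<in>S. SUP \<sigma>\<in>signals S. ennreal (norm x) +
      (\<Sum>k. ennreal (norm (phi A B k \<sigma> (A i *v x + B i *v \<Psi> [x] []) (shift_controller \<Psi> x i)))))"
    by (rule SUP_signals_unfold)
  also have "\<dots> = ennreal (norm x) +
      (SUP i\<in>S. cost S A B (A i *v x + B i *v \<Psi> [x] []) (shift_controller \<Psi> x i))"
    unfolding cost_def
    by (simp add: ennreal_SUP_add_right assms signals_nonempty)
  finally show ?thesis .
qed

text \<open>The continuation after the first step may be chosen separately for every first mode,
  which is what exchanges the infimum over controllers with the supremum over modes.\<close>

lemma Vfun_le_Bellman_step: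
  assumes "S \<noteq> {}"
  shows "Vfun S A B x \<le> ennreal (norm x) + (SUP i\<in>S. Vfun S A B (A i *v x + B i *v u))"
proof -
  let ?y = "\<lambda>i. A i *v x + B i *v u"
  have "Vfun S A B x \<le> ennreal (norm x) + (SUP i\<in>S. cost S A B (?y i) (\<Psi>s i))" for \<Psi>s
  proof -
    have "Vfun S A B x \<le> cost S A B x (branch_controller u \<Psi>s)"
      unfolding Vfun_eq_INF_cost by (rule INF_lower) simp
    also have "\<dots> = ennreal (norm x) + (SUP i\<in>S. cost S A B (?y i) (\<Psi>s i))"
      by (subst cost_unfold[OF assms]) (simp add: branch_controller_Nil shift_branch_controller)
    finally show ?thesis .
  qed
  then have "Vfun S A B x \<le> (INF \<Psi>s. ennreal (norm x) + (SUP i\<in>S. cost S A B (?y i) (\<Psi>s i)))"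
    by (rule INF_greatest)
  also have "\<dots> = ennreal (norm x) + (INF \<Psi>s. SUP i\<in>S. cost S A B (?y i) (\<Psi>s i))"
    by (rule ennreal_add_INF[symmetric])
  also have "\<dots> \<le> ennreal (norm x) + (SUP i\<in>S. INF \<Psi>. cost S A B (?y i) \<Psi>)"
    by (intro add_left_mono INF_SUP_choice_le)
  finally show ?thesis
    by (simp only: Vfun_eq_INF_cost)
qed

lemma Bellman_step_le_cost:
  assumes "S \<noteq> {}"
  shows "ennreal (norm x) + (SUP i\<in>S. Vfun S A B (A i *v x + B i *v \<Psi> [x] [])) \<le> cost S A B x \<Psi>"
proof -
  have "ennreal (norm x) + (SUP i\<in>S. Vfun S A B (A i *v x + B i *v \<Psi> [x] []))
      \<le> ennreal (norm x) + (SUP i\<in>S. cost S A B (A i *v x + B i *v \<Psi> [x] []) (shift_controller \<Psi> x i))"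
    unfolding Vfun_eq_INF_cost by (intro add_left_mono SUP_subset_mono order_refl INF_lower) simp
  also have "\<dots> = cost S A B x \<Psi>"
    by (rule cost_unfold[OF assms, symmetric])
  finally show ?thesis .
qed

theorem Vfun_Bellman:
  assumes "S \<noteq> {}"
  shows "Vfun S A B x = ennreal (norm x) + (INF u. SUP i\<in>S. Vfun S A B (A i *v x + B i *v u))"
proof (rule antisym)
  show "Vfun S A B x \<le> ennreal (norm x) + (INF u. SUP i\<in>S. Vfun S A B (A i *v x + B i *v u))"
    unfolding ennreal_add_INF using Vfun_le_Bellman_step[OF assms] by (rule INF_greatest)
  have "ennreal (norm x) + (INF u. SUP i\<in>S. Vfun S A B (A i *v x + B i *v u)) \<le> cost S A B x \<Psi>"
    for \<Psi>
    using Bellman_step_le_cost[OF assms] by (rule order_trans[rotated]) (intro add_left_mono INF_lower UNIV_I)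
  then show "ennreal (norm x) + (INF u. SUP i\<in>S. Vfun S A B (A i *v x + B i *v u)) \<le> Vfun S A B x"
    unfolding Vfun_eq_INF_cost[of S A B x] by (rule INF_greatest)
qed

corollary norm_le_Vfun: "S \<noteq> {} \<Longrightarrow> ennreal (norm x) \<le> Vfun S A B x"
  by (subst Vfun_Bellman) simp_all

section \<open>Continuity of the value function\<close>

lemma cost_open_loop: "\<exists>G. cost S A B x \<Psi> = cost S A B x (\<lambda>_. G)"
proof -
  obtain G where "\<forall>\<sigma> k. hist A B \<sigma> x \<Psi> k = hist A B \<sigma> x (\<lambda>_. G) k"
    using hist_open_loop by blast
  then show ?thesis
    unfolding cost_def phi_def by auto
qed

lemma cost_open_loop_add_le:
  "cost S A B (x + y) (\<lambda>_ ms. G1 ms + G2 ms) \<le> cost S A B x (\<lambda>_. G1) + cost S A B y (\<lambda>_. G2)"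
  unfolding cost_def
proof (rule SUP_least)
  fix \<sigma> assume \<sigma>: "\<sigma> \<in> signals S"
  have "(\<Sum>k. ennreal (norm (phi A B k \<sigma> (x + y) (\<lambda>_ ms. G1 ms + G2 ms))))
      \<le> (\<Sum>k. ennreal (norm (phi A B k \<sigma> x (\<lambda>_. G1))) + ennreal (norm (phi A B k \<sigma> y (\<lambda>_. G2))))"
    unfolding phi_open_loop_add
    by (intro suminf_le summableI)
       (simp add: norm_triangle_ineq flip: ennreal_plus)
  also have "\<dots> = (\<Sum>k. ennreal (norm (phi A B k \<sigma> x (\<lambda>_. G1))))
      + (\<Sum>k. ennreal (norm (phi A B k \<sigma> y (\<lambda>_. G2))))"
    by (intro suminf_add[symmetric] summableI)
  also have "\<dots> \<le> (SUP \<sigma>\<in>signals S. \<Sum>k. ennreal (norm (phi A B k \<sigma> x (\<lambda>_. G1))))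
      + (SUP \<sigma>\<in>signals S. \<Sum>k. ennreal (norm (phi A B k \<sigma> y (\<lambda>_. G2))))"
    by (intro add_mono SUP_upper \<sigma>)
  finally show "(\<Sum>k. ennreal (norm (phi A B k \<sigma> (x + y) (\<lambda>_ ms. G1 ms + G2 ms)))) \<le> \<dots>" .
qed

lemma Vfun_add_le: "Vfun S A B (x + y) \<le> Vfun S A B x + Vfun S A B y"
proof -
  have "Vfun S A B (x + y) \<le> cost S A B x \<Psi>1 + cost S A B y \<Psi>2" for \<Psi>1 \<Psi>2
  proof -
    obtain G1 G2 where G1: "cost S A B x \<Psi>1 = cost S A B x (\<lambda>_. G1)"
      and G2: "cost S A B y \<Psi>2 = cost S A B y (\<lambda>_. G2)"
      using cost_open_loop by metis
    have "Vfun S A B (x + y) \<le> cost S A B (x + y) (\<lambda>_ ms. G1 ms + G2 ms)"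
      unfolding Vfun_eq_INF_cost by (rule INF_lower) simp
    also have "\<dots> \<le> cost S A B x (\<lambda>_. G1) + cost S A B y (\<lambda>_. G2)"
      by (rule cost_open_loop_add_le)
    finally show ?thesis
      unfolding G1 G2 .
  qed
  then have "Vfun S A B (x + y) \<le> (INF \<Psi>1. cost S A B y \<Psi>2 + cost S A B x \<Psi>1)" for \<Psi>2
    by (intro INF_greatest) (simp add: add.commute)
  then have "Vfun S A B (x + y) \<le> (INF \<Psi>2. Vfun S A B x + cost S A B y \<Psi>2)"
    by (intro INF_greatest) (simp add: add.commute Vfun_eq_INF_cost[of S A B x] ennreal_add_INF)
  then show ?thesis
    by (simp only: Vfun_eq_INF_cost[of S A B y] ennreal_add_INF)
qed

lemma Vfun_le_linear:
  fixes S :: "'i set" and A :: "'i \<Rightarrow> real^'n^'n" and B :: "'i \<Rightarrow> real^'m^'n"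
  assumes "IFS_m S A B"
  obtains C where "C \<ge> 0" "\<And>x. Vfun S A B x \<le> ennreal (C * norm x)"
proof -
  obtain \<Psi> :: "(real^'n) list \<Rightarrow> 'i list \<Rightarrow> real^'m" and M \<gamma> where
    "M > 0" "0 \<le> \<gamma>" "\<gamma> < 1"
    and decay: "\<And>x \<sigma> k. \<sigma> \<in> signals S \<Longrightarrow> norm (phi A B k \<sigma> x \<Psi>) \<le> M * \<gamma> ^ k * norm x"
    using assms unfolding IFS_m_def by blast
  define C where "C = M / (1 - \<gamma>)"
  have "Vfun S A B x \<le> ennreal (C * norm x)" for x
  proof -
    have geometric: "(\<lambda>k. M * \<gamma> ^ k * norm x) sums (C * norm x)"
      using sums_mult[OF geometric_sums, of \<gamma> "M * norm x"] \<open>0 \<le> \<gamma>\<close> \<open>\<gamma> < 1\<close>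
      by (simp add: C_def ac_simps)
    have "cost S A B x \<Psi> \<le> ennreal (C * norm x)"
      unfolding cost_def
    proof (rule SUP_least)
      fix \<sigma> assume "\<sigma> \<in> signals S"
      then have "(\<Sum>k. ennreal (norm (phi A B k \<sigma> x \<Psi>))) \<le> (\<Sum>k. ennreal (M * \<gamma> ^ k * norm x))"
        by (intro suminf_le summableI ennreal_leI decay)
      also have "\<dots> = ennreal (\<Sum>k. M * \<gamma> ^ k * norm x)"
        using geometric \<open>M > 0\<close> \<open>0 \<le> \<gamma>\<close> by (intro suminf_ennreal2 sums_summable) auto
      also have "\<dots> = ennreal (C * norm x)"
        using geometric by (simp add: sums_iff)
      finally show "(\<Sum>k. ennreal (norm (phi A B k \<sigma> x \<Psi>))) \<le> ennreal (C * norm x)" .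
    qed
    then show ?thesis
      unfolding Vfun_eq_INF_cost by (metis INF_lower2 UNIV_I)
  qed
  moreover have "C \<ge> 0"
    using \<open>M > 0\<close> \<open>\<gamma> < 1\<close> by (simp add: C_def)
  ultimately show ?thesis
    using that by blast
qed

lemma Vfun_less_top: "IFS_m S A B \<Longrightarrow> Vfun S A B x < top"
  by (metis Vfun_le_linear ennreal_less_top le_less_trans)

lemma continuous_on_enn2real_Vfun:
  assumes "IFS_m S A B"
  shows "continuous_on UNIV (\<lambda>x. enn2real (Vfun S A B x))"
proof -
  obtain C where "C \<ge> 0" and bound: "\<And>x. Vfun S A B x \<le> ennreal (C * norm x)"
    using Vfun_le_linear[OF assms] by blast
  note finite = Vfun_less_top[OF assms]
  have "C-lipschitz_on UNIV (\<lambda>x. enn2real (Vfun S A B x))"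
  proof (rule lipschitz_on_subadditive)
    show "enn2real (Vfun S A B (x + y)) \<le> enn2real (Vfun S A B x) + enn2real (Vfun S A B y)" for x y
      using enn2real_mono[OF Vfun_add_le[of S A B x y]] finite[of x] finite[of y]
      by (simp add: enn2real_plus)
    show "enn2real (Vfun S A B x) \<le> C * norm x" for x
      using enn2real_mono[OF bound] \<open>C \<ge> 0\<close> by simp
  qed fact
  then show ?thesis
    by (rule lipschitz_on_continuous_on)
qed

lemma norm_le_enn2real_Vfun:
  assumes "S \<noteq> {}" "IFS_m S A B"
  shows "norm x \<le> enn2real (Vfun S A B x)"
  using norm_le_Vfun[OF assms(1), of x A B] Vfun_less_top[OF assms(2), of x]
  by (simp add: ennreal_le_iff[symmetric])

lemma Bellman_minimizer_exists:
  fixes S :: "'i set" and A :: "'i \<Rightarrow> real^'n^'n" and B :: "'i \<Rightarrow> real^'m^'n"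
  assumes "finite S" "S \<noteq> {}" "IFS_m S A B"
  obtains u0 where "\<And>u. Max ((\<lambda>i. Vfun S A B (A i *v x + B i *v u0)) ` S)
                       \<le> Max ((\<lambda>i. Vfun S A B (A i *v x + B i *v u)) ` S)"
proof -
  define g where "g u = Max ((\<lambda>i. enn2real (Vfun S A B (A i *v x + B i *v u))) ` S)" for u
  have Max_eq: "Max ((\<lambda>i. Vfun S A B (A i *v x + B i *v u)) ` S) = ennreal (g u)" for u
  proof -
    have "Max ((\<lambda>i. Vfun S A B (A i *v x + B i *v u)) ` S)
        = Max (ennreal ` (\<lambda>i. enn2real (Vfun S A B (A i *v x + B i *v u))) ` S)"
      using Vfun_less_top[OF assms(3)] by (simp add: image_image)
    also have "\<dots> = ennreal (g u)"
      unfolding g_def using assms(1,2) by (intro mono_Max_commute[symmetric]) (auto simp: mono_def ennreal_leI)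
    finally show ?thesis .
  qed
  have continuous: "continuous_on UNIV g"
    unfolding g_def using assms(1,2)
    by (intro continuous_on_Max continuous_on_compose2[OF continuous_on_enn2real_Vfun[OF assms(3)]])
       (auto intro!: continuous_on_add continuous_on_const matrix_vector_mult_linear_continuous_on)
  have invariant: "g (u + k) = g u" if "\<forall>i\<in>S. B i *v k = 0" for u k
    using that unfolding g_def by (simp add: matrix_vector_right_distrib)
  have coercive: "norm (B i *v u) \<le> norm (A i *v x) + g u" if "i \<in> S" for i u
  proof -
    have "norm (B i *v u) \<le> norm (A i *v x) + norm (A i *v x + B i *v u)"
      by (metis add_diff_cancel_left' add.commute norm_triangle_ineq4)
    also have "\<dots> \<le> norm (A i *v x) + enn2real (Vfun S A B (A i *v x + B i *v u))"
      using norm_le_enn2real_Vfun[OF assms(2,3)] by simp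
    also have "\<dots> \<le> norm (A i *v x) + g u"
      unfolding g_def using that assms(1) by (simp add: Max_ge)
    finally show ?thesis .
  qed
  obtain u0 where "\<And>u. g u0 \<le> g u"
    using continuous_attains_min_if_coercive_modulo_kernels[where L = "\<lambda>i u. B i *v u",
        OF assms(1) matrix_vector_mul_linear continuous invariant coercive]
    by blast
  then show ?thesis
    using that unfolding Max_eq by (meson ennreal_leI)
qed

theorem mainTheorem4:
  fixes S :: "'i set"
    and A :: "'i \<Rightarrow> real^'n^'n"
    and B :: "'i \<Rightarrow> real^'m^'n"
  assumes "finite S" and "S \<noteq> {}"
    and "IFS_m S A B"
  shows "\<forall>x :: real^'n. \<exists>u0 :: real^'m.
           (\<forall>u. Max ((\<lambda>i. Vfun S A B (A i *v x + B i *v u0)) ` S)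
                \<le> Max ((\<lambda>i. Vfun S A B (A i *v x + B i *v u)) ` S))
         \<and> Vfun S A B x = ennreal (norm x) + Max ((\<lambda>i. Vfun S A B (A i *v x + B i *v u0)) ` S)"
proof
  fix x :: "real^'n"
  let ?M = "\<lambda>u. Max ((\<lambda>i. Vfun S A B (A i *v x + B i *v u)) ` S)"
  obtain u0 where u0: "\<And>u. ?M u0 \<le> ?M u"
    using Bellman_minimizer_exists[OF assms] by blast
  have "Vfun S A B x = ennreal (norm x) + (INF u. SUP i\<in>S. Vfun S A B (A i *v x + B i *v u))"
    by (rule Vfun_Bellman[OF assms(2)])
  also have "(INF u. SUP i\<in>S. Vfun S A B (A i *v x + B i *v u)) = (INF u. ?M u)"
    using assms(1,2) by (simp add: Max_Sup)
  also have "(INF u. ?M u) = ?M u0"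
    using u0 by (intro antisym INF_lower INF_greatest) auto
  finally show "\<exists>u0. (\<forall>u. ?M u0 \<le> ?M u) \<and> Vfun S A B x = ennreal (norm x) + ?M u0"
    using u0 by blast
qed

end
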